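(* Let $n\ge3$ be odd, $d,R\in\mathbb{Q}$, $d\ne0$, $R$ not a square, $D=d^2-R$, and fix a square root $\sqrt R\in\mathbb{C}$. Let $y,y'\in\mathbb{C}$ satisfy $y^n=d+\sqrt R$ and $y'^n=d-\sqrt R$, and put $z=yy'$ and $u=z^{(n-1)/2}(y+y')$ (so $z^n=D$ and $f_n(u,d,R)=0$). Then $$\{y,y'\}=\Big\{\,z^{(n+1)/2}\Big(\frac{u}{2D}+A(u)\sqrt R\Big),\ z^{(n+1)/2}\Big(\frac{u}{2D}-A(u)\sqrt R\Big)\Big\}.$$
   Context: For $k\ge1$, $F_k=\sum_{j=0}^{\lfloor k/2\rfloor}(-1)^j\frac{k}{k-j}\binom{k-j}{j}Z^{k-2j}$ (so $2\cos(kx)=F_k(2\cos x)$). $f_n(Z,d,R)=\sqrt D^{\,n}F_n(Z/\sqrt D)-2dD^{(n-1)/2}=\sum_{j=0}^{(n-1)/2}(-1)^j\frac{n}{n-j}\binom{n-j}{j}D^jZ^{n-2j}-2dD^{(n-1)/2}$. The polynomial $A\in\mathbb{Q}[Z]$ is $$A=\frac{1}{2R}\Big(F_{n-1}(Z/\sqrt D)-\frac{dZ}{D}\Big),\qquad F_{n-1}(Z/\sqrt D)=\sum_{j=0}^{(n-1)/2}(-1)^j\frac{n-1}{n-1-j}\binom{n-1-j}{j}D^{\,j-(n-1)/2}Z^{n-1-2j}.$$ *)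

theory Defs
  imports Complex_Main
begin

text \<open>Coefficient of Z^(k-2j) in F_k: (-1)^j * k/(k-j) * binom(k-j, j).\<close>
definition F_coef :: "nat \<Rightarrow> nat \<Rightarrow> rat" where
  "F_coef k j = (-1) ^ j * (of_nat k / of_nat (k - j)) * of_nat ((k - j) choose j)"

text \<open>The polynomial A in Q[Z] (evaluated at a complex Z), with D = d^2 - R:
  A = 1/(2R) * ( F_{n-1}(Z / sqrt D) - d Z / D ), where
  F_{n-1}(Z/sqrt D) = sum_{j=0}^{(n-1)/2} F_coef (n-1) j * D^(j-(n-1)/2) * Z^(n-1-2j).\<close>
definition A_poly :: "nat \<Rightarrow> rat \<Rightarrow> rat \<Rightarrow> complex \<Rightarrow> complex" where
  "A_poly n d R Z =
     (let D = d\<^sup>2 - R in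
      (1 / (2 * of_rat R)) *
        ((\<Sum>j = 0..(n - 1) div 2.
            of_rat (F_coef (n - 1) j * D powi (int j - int ((n - 1) div 2))) * Z ^ (n - 1 - 2 * j))
         - of_rat d * Z / of_rat D))"

end

theory Submission
  imports Defs
begin

(*
  Write n = 2m + 1 and z = y y', so that z^n = D. The polynomial F_{n-1} is evaluated at
  u / sqrt D = (y + y') / sqrt z = t + 1/t with t = sqrt (y / y'), hence equals
  t^(2m) + t^(-2m) = (y^(2m) + y'^(2m)) / z^m; algebraically this is Waring's formula expressing
  a^k + b^k through a + b and a b, whose coefficients are exactly F_coef k j. Substituting
  d = (y^n + y'^n) / 2 and sqrt R = (y^n - y'^n) / 2 then collapses A(u) sqrt R to
  (y' - y) / (2 z^(m+1)), while u / (2 D) = (y + y') / (2 z^(m+1)).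
*)

definition complete_hom :: "nat \<Rightarrow> 'a::comm_ring_1 \<Rightarrow> 'a \<Rightarrow> 'a" where
  "complete_hom k a b = (\<Sum>i\<le>k. a ^ i * b ^ (k - i))"

lemma complete_hom_Suc_left: "complete_hom (Suc k) a b = a ^ Suc k + b * complete_hom k a b"
  unfolding complete_hom_def by (simp add: sum_distrib_left Suc_diff_le mult.left_commute)

lemma complete_hom_Suc_right: "complete_hom (Suc k) a b = b ^ Suc k + a * complete_hom k a b"
  unfolding complete_hom_def
  by (simp add: sum.atMost_Suc_shift sum_distrib_left del: sum.atMost_Suc) (simp add: algebra_simps)

lemma complete_hom_rec:
  "complete_hom (k + 2) a b = (a + b) * complete_hom (k + 1) a b - a * b * complete_hom k a b"
  using complete_hom_Suc_left[of "Suc k" a b] complete_hom_Suc_left[of k a b]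
  by (simp add: algebra_simps)

lemma power_sum_eq_complete_hom:
  "a ^ (k + 2) + b ^ (k + 2) = complete_hom (k + 2) a b - a * b * complete_hom k a b"
  using complete_hom_Suc_left[of "Suc k" a b] complete_hom_Suc_right[of k a b]
  by (simp add: algebra_simps)

text \<open>\<^term>\<open>chebyshev_U k (2 * x) 1\<close> is the Chebyshev polynomial of the second kind U_k(x).\<close>

definition chebyshev_U_term :: "nat \<Rightarrow> nat \<Rightarrow> 'a::comm_ring_1 \<Rightarrow> 'a \<Rightarrow> 'a" where
  "chebyshev_U_term k j s p = (-1) ^ j * of_nat ((k - j) choose j) * s ^ (k - 2 * j) * p ^ j"

definition chebyshev_U :: "nat \<Rightarrow> 'a::comm_ring_1 \<Rightarrow> 'a \<Rightarrow> 'a" where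
  "chebyshev_U k s p = (\<Sum>j\<le>k. chebyshev_U_term k j s p)"

lemma chebyshev_U_term_eq_0: "k < 2 * j \<Longrightarrow> chebyshev_U_term k j s p = 0"
  unfolding chebyshev_U_term_def by (simp add: binomial_eq_0)

lemma chebyshev_U_term_rec:
  "chebyshev_U_term (k + 2) (Suc j) s p =
     s * chebyshev_U_term (k + 1) (Suc j) s p - p * chebyshev_U_term k j s p"
proof -
  consider "k < 2 * j" | "k = 2 * j" | r where "k = Suc (2 * j + r)"
    by (metis less_imp_Suc_add linorder_neqE_nat)
  then show ?thesis
  proof cases
    case 3
    then have "k + 2 - Suc j = Suc (k - j)" "k + 1 - Suc j = k - j"
      "k + 2 - 2 * Suc j = Suc (k + 1 - 2 * Suc j)" "k - 2 * j = k + 2 - 2 * Suc j"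
      by simp_all
    then show ?thesis
      unfolding chebyshev_U_term_def binomial_Suc_Suc by (simp add: algebra_simps)
  qed (simp_all add: chebyshev_U_term_def binomial_eq_0)
qed

lemma chebyshev_U_eq_sum_atMost:
  assumes "k div 2 \<le> M"
  shows "chebyshev_U k s p = (\<Sum>j\<le>M. chebyshev_U_term k j s p)"
  unfolding chebyshev_U_def
  by (rule sum.mono_neutral_cong) (use assms in \<open>auto intro!: chebyshev_U_term_eq_0\<close>)

lemma chebyshev_U_rec:
  "chebyshev_U (k + 2) s p = s * chebyshev_U (k + 1) s p - p * chebyshev_U k s p"
proof -
  have "chebyshev_U (k + 1) s p = (\<Sum>j\<le>Suc (k + 1). chebyshev_U_term (k + 1) j s p)"
    by (rule chebyshev_U_eq_sum_atMost) simp
  then have U1: "chebyshev_U (k + 1) s p =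
      chebyshev_U_term (k + 1) 0 s p + (\<Sum>i\<le>k + 1. chebyshev_U_term (k + 1) (Suc i) s p)"
    by (simp only: sum.atMost_Suc_shift)
  have U0: "chebyshev_U k s p = (\<Sum>i\<le>k + 1. chebyshev_U_term k i s p)"
    by (rule chebyshev_U_eq_sum_atMost) simp
  have "chebyshev_U (k + 2) s p =
      chebyshev_U_term (k + 2) 0 s p + (\<Sum>i\<le>k + 1. chebyshev_U_term (k + 2) (Suc i) s p)"
    unfolding chebyshev_U_def by (simp add: sum.atMost_Suc_shift del: sum.atMost_Suc)
  also have "\<dots> = s * chebyshev_U_term (k + 1) 0 s p
      + (\<Sum>i\<le>k + 1. s * chebyshev_U_term (k + 1) (Suc i) s p - p * chebyshev_U_term k i s p)"
    by (simp only: chebyshev_U_term_rec) (simp add: chebyshev_U_term_def)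
  also have "\<dots> = s * (chebyshev_U_term (k + 1) 0 s p
        + (\<Sum>i\<le>k + 1. chebyshev_U_term (k + 1) (Suc i) s p))
      - p * (\<Sum>i\<le>k + 1. chebyshev_U_term k i s p)"
    by (simp only: sum_subtractf sum_distrib_left distrib_left add_diff_eq)
  also have "\<dots> = s * chebyshev_U (k + 1) s p - p * chebyshev_U k s p"
    by (simp only: U1 U0)
  finally show ?thesis .
qed

lemma chebyshev_U_sum_prod: "chebyshev_U k (a + b) (a * b) = complete_hom k a b"
proof (induction k rule: nat_less_induct)
  case (1 k)
  consider "k = 0" | "k = 1" | k' where "k = k' + 2"
    by (metis One_nat_def add_2_eq_Suc' not0_implies_Suc)
  then show ?case
  proof cases
    case 3
    then show ?thesis
      using "1"[rule_format, of k'] "1"[rule_format, of "k' + 1"]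
        chebyshev_U_rec[of k' "a + b" "a * b"] complete_hom_rec[of k' a b]
      by simp
  qed (simp_all add: chebyshev_U_def chebyshev_U_term_def complete_hom_def)
qed

lemma F_coef_eq_binomials:
  assumes "0 < j" "j < k"
  shows "F_coef k j = (-1) ^ j * (of_nat ((k - j) choose j) + of_nat ((k - j - 1) choose (j - 1)))"
proof -
  obtain i where j: "j = Suc i" using assms by (cases j) auto
  obtain N where N: "k - j = Suc N" using assms by (cases "k - j") auto
  have k: "of_nat k = (of_nat (Suc N) + of_nat (Suc i) :: rat)"
    using N j assms by simp
  have absorb: "of_nat (Suc i) * of_nat (Suc N choose Suc i) = (of_nat (Suc N) * of_nat (N choose i) :: rat)"
    using Suc_times_binomial[of i N] by (metis of_nat_mult)
  have "of_nat k / of_nat (k - j) * of_nat ((k - j) choose j)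
      = (of_nat ((k - j) choose j) + of_nat ((k - j - 1) choose (j - 1)) :: rat)"
    unfolding N unfolding k j using absorb by (simp add: field_simps del: of_nat_Suc)
  then show ?thesis
    unfolding F_coef_def by (simp only: mult.assoc)
qed

lemma F_coef_sum_eq_chebyshev_U:
  fixes s p :: "'a::field_char_0"
  shows "(\<Sum>j = 0..(k + 2) div 2. of_rat (F_coef (k + 2) j) * s ^ (k + 2 - 2 * j) * p ^ j)
    = chebyshev_U (k + 2) s p - p * chebyshev_U k s p"
proof -
  have summand: "of_rat (F_coef (k + 2) j) * s ^ (k + 2 - 2 * j) * p ^ j
      = chebyshev_U_term (k + 2) j s p - (if j = 0 then 0 else p * chebyshev_U_term k (j - 1) s p)"
    if "j \<le> Suc (k div 2)" for j
  proof (cases j)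
    case 0
    then show ?thesis by (simp add: F_coef_def chebyshev_U_term_def)
  next
    case (Suc i)
    have F: "F_coef (k + 2) j = (-1) ^ j * (of_nat ((k + 2 - j) choose j) + of_nat ((k - i) choose i))"
      using F_coef_eq_binomials[of j "k + 2"] Suc that by simp
    have "k + 2 - 2 * j = k - 2 * i"
      using Suc by simp
    then show ?thesis
      unfolding F chebyshev_U_term_def using Suc
      by (simp add: of_rat_add of_rat_diff of_rat_mult of_rat_minus of_rat_power algebra_simps)
  qed
  have "(\<Sum>j = 0..(k + 2) div 2. of_rat (F_coef (k + 2) j) * s ^ (k + 2 - 2 * j) * p ^ j)
      = (\<Sum>j\<le>Suc (k div 2). chebyshev_U_term (k + 2) j s p
          - (if j = 0 then 0 else p * chebyshev_U_term k (j - 1) s p))"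
    by (intro sum.cong summand) auto
  also have "\<dots> = (\<Sum>j\<le>Suc (k div 2). chebyshev_U_term (k + 2) j s p)
      - p * (\<Sum>i\<le>k div 2. chebyshev_U_term k i s p)"
    by (simp add: sum_subtractf sum.atMost_Suc_shift sum_distrib_left del: sum.atMost_Suc)
  also have "\<dots> = chebyshev_U (k + 2) s p - p * chebyshev_U k s p"
    by (simp only: chebyshev_U_eq_sum_atMost[of "k + 2" "Suc (k div 2)"]
        chebyshev_U_eq_sum_atMost[OF le_refl]) simp
  finally show ?thesis .
qed

theorem power_sum_eq_F_coef_sum:
  fixes a b :: "'a::field_char_0"
  assumes "0 < k"
  shows "(\<Sum>j = 0..k div 2. of_rat (F_coef k j) * (a + b) ^ (k - 2 * j) * (a * b) ^ j) = a ^ k + b ^ k"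
proof (cases "k = 1")
  case True
  then show ?thesis by (simp add: F_coef_def)
next
  case False
  with assms have "k = (k - 2) + 2"
    by simp
  then obtain k' where "k = k' + 2"
    by blast
  then show ?thesis
    using F_coef_sum_eq_chebyshev_U[of k' "a + b" "a * b"] power_sum_eq_complete_hom[of a k' b]
    by (simp add: chebyshev_U_sum_prod)
qed

lemma rescaled_summand:
  fixes z s :: "'a::field_char_0"
  assumes "z \<noteq> 0" "of_rat D = z ^ (2 * m + 1)" "j \<le> m"
  shows "of_rat (c * D powi (int j - int m)) * (z ^ m * s) ^ (2 * m - 2 * j)
    = of_rat c * s ^ (2 * m - 2 * j) * z ^ j / z ^ m"
proof -
  obtain t where m: "m = j + t"
    using assms(3) le_Suc_ex by blast
  have "D powi (int j - int m) = inverse D ^ t"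
    unfolding power_int_def m by (simp add: nat_add_distrib)
  then have D: "of_rat (D powi (int j - int m)) = inverse (z ^ (2 * m + 1)) ^ t"
    by (simp add: of_rat_inverse of_rat_power assms(2))
  have zs: "(z ^ m * s) ^ (2 * t) = z ^ (2 * m * t) * s ^ (2 * t)"
    by (simp add: power_mult_distrib power_mult[symmetric] ac_simps)
  have zD: "(z ^ (2 * m + 1)) ^ t = z ^ (2 * m * t) * z ^ t"
    by (simp add: power_mult_distrib flip: power_mult)
  have e: "2 * m - 2 * j = 2 * t" and zm: "z ^ m = z ^ j * z ^ t"
    by (simp_all add: m power_add)
  show ?thesis
    unfolding of_rat_mult D e zs unfolding zD zm power_inverse
    using assms(1) by (simp add: field_simps)
qed

lemma F_coef_sum_rescaled:
  fixes a b :: "'a::field_char_0"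
  assumes "a * b \<noteq> 0" "of_rat D = (a * b) ^ (2 * m + 1)" "0 < m"
  shows "(\<Sum>j = 0..m. of_rat (F_coef (2 * m) j * D powi (int j - int m))
      * ((a * b) ^ m * (a + b)) ^ (2 * m - 2 * j)) = (a ^ (2 * m) + b ^ (2 * m)) / (a * b) ^ m"
proof -
  have "(\<Sum>j = 0..m. of_rat (F_coef (2 * m) j * D powi (int j - int m))
      * ((a * b) ^ m * (a + b)) ^ (2 * m - 2 * j))
      = (\<Sum>j = 0..2 * m div 2. of_rat (F_coef (2 * m) j) * (a + b) ^ (2 * m - 2 * j) * (a * b) ^ j)
        / (a * b) ^ m"
    using assms(1,2) by (simp add: rescaled_summand sum_divide_distrib)
  then show ?thesis
    using power_sum_eq_F_coef_sum[of "2 * m" a b] assms(3) by simp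
qed

lemma power_mult_div_odd_power:
  fixes z w :: "'a::field"
  assumes "z \<noteq> 0"
  shows "z ^ m * w / z ^ (2 * m + 1) = w / z ^ (m + 1)"
proof -
  have "z ^ (2 * m + 1) = z ^ m * z ^ (m + 1)"
    by (metis add.assoc mult_2 power_add)
  then show ?thesis
    using assms by simp
qed

lemma prod_conj_roots_power:
  fixes y y' sR :: complex
  assumes "sR\<^sup>2 = of_rat R" "y ^ n = of_rat d + sR" "y' ^ n = of_rat d - sR"
  shows "(y * y') ^ n = of_rat (d\<^sup>2 - R)"
  unfolding power_mult_distrib assms(2,3) using assms(1)
  by (simp add: of_rat_diff of_rat_mult algebra_simps power2_eq_square)

lemma A_poly_at_u:
  fixes y y' sR :: complex
  assumes "0 < m" "R \<noteq> 0" "y * y' \<noteq> 0" "sR\<^sup>2 = of_rat R"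
    and y: "y ^ (2 * m + 1) = of_rat d + sR" and y': "y' ^ (2 * m + 1) = of_rat d - sR"
  shows "A_poly (2 * m + 1) d R ((y * y') ^ m * (y + y')) * sR = (y' - y) / (2 * (y * y') ^ (m + 1))"
proof -
  define z where "z = y * y'"
  define u where "u = z ^ m * (y + y')"
  have z: "z \<noteq> 0"
    using assms(3) z_def by simp
  have D: "of_rat (d\<^sup>2 - R) = z ^ (2 * m + 1)"
    unfolding z_def using prod_conj_roots_power[OF assms(4) y y'] by simp
  have sR: "sR \<noteq> 0"
    using assms(2,4) by auto
  have "z * (y ^ (2 * m) + y' ^ (2 * m)) - of_rat d * (y + y')
      = y' * y ^ (2 * m + 1) + y * y' ^ (2 * m + 1) - of_rat d * (y + y')"
    unfolding z_def by (simp add: algebra_simps)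
  also have "\<dots> = - sR * (y - y')"
    unfolding y y' by (simp add: algebra_simps)
  finally have numerator: "z * (y ^ (2 * m) + y' ^ (2 * m)) - of_rat d * (y + y') = - sR * (y - y')" .
  have F_sum: "(\<Sum>j = 0..(2 * m + 1 - 1) div 2. of_rat (F_coef (2 * m + 1 - 1) j
        * (d\<^sup>2 - R) powi (int j - int ((2 * m + 1 - 1) div 2))) * u ^ (2 * m + 1 - 1 - 2 * j))
      = (y ^ (2 * m) + y' ^ (2 * m)) / z ^ m"
    using F_coef_sum_rescaled[of y y' "d\<^sup>2 - R" m] assms(1,3) D unfolding u_def z_def by simp
  have u_div_D: "u / of_rat (d\<^sup>2 - R) = (y + y') / z ^ (m + 1)"
    unfolding u_def D using z by (rule power_mult_div_odd_power)
  have "A_poly (2 * m + 1) d R u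
      = ((y ^ (2 * m) + y' ^ (2 * m)) / z ^ m - of_rat d * ((y + y') / z ^ (m + 1))) / (2 * of_rat R)"
    unfolding A_poly_def Let_def F_sum times_divide_eq_right[symmetric] u_div_D by simp
  also have "\<dots> = (z * (y ^ (2 * m) + y' ^ (2 * m)) - of_rat d * (y + y')) / (2 * of_rat R * z ^ (m + 1))"
    using z assms(2) by (simp add: field_simps)
  finally have "A_poly (2 * m + 1) d R u = \<dots>" .
  then have "A_poly (2 * m + 1) d R u * sR = - sR * (y - y') * sR / (2 * sR\<^sup>2 * z ^ (m + 1))"
    unfolding numerator assms(4) by simp
  also have "\<dots> = (y' - y) / (2 * z ^ (m + 1))"
    using sR z by (simp add: power2_eq_square field_simps)
  finally show ?thesis
    unfolding u_def z_def .
qed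

theorem proposition1:
  fixes n :: nat and d R :: rat and sR y y' :: complex
  assumes "odd n" and "n \<ge> 3"
    and "d \<noteq> 0"
    and "\<not> (\<exists>q::rat. q\<^sup>2 = R)"
    and "sR\<^sup>2 = of_rat R"
    and "y ^ n = of_rat d + sR"
    and "y' ^ n = of_rat d - sR"
  shows "(let D = d\<^sup>2 - R; z = y * y'; u = z ^ ((n - 1) div 2) * (y + y') in
          {y, y'} = {z ^ ((n + 1) div 2) * (u / (2 * of_rat D) + A_poly n d R u * sR),
                     z ^ ((n + 1) div 2) * (u / (2 * of_rat D) - A_poly n d R u * sR)})"
proof -
  from \<open>odd n\<close> obtain m where n: "n = 2 * m + 1"
    by (rule oddE)
  with \<open>n \<ge> 3\<close> have "0 < m" and div: "(n - 1) div 2 = m" "(n + 1) div 2 = m + 1"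
    by simp_all
  define z where "z = y * y'"
  have R: "R \<noteq> 0" and D: "d\<^sup>2 - R \<noteq> 0"
    using assms(4) by (auto simp: right_minus_eq)
  have zn: "z ^ n = of_rat (d\<^sup>2 - R)"
    unfolding z_def using prod_conj_roots_power assms(5-7) .
  with D n have z: "z \<noteq> 0"
    by auto
  define u where "u = z ^ m * (y + y')"
  have A: "A_poly n d R u * sR = (y' - y) / (2 * z ^ (m + 1))"
    unfolding n u_def z_def
    by (rule A_poly_at_u[OF \<open>0 < m\<close> R z[unfolded z_def] assms(5) assms(6,7)[unfolded n]])
  have half: "u / (2 * of_rat (d\<^sup>2 - R)) = (y + y') / (2 * z ^ (m + 1))"
    unfolding divide_divide_eq_left'[symmetric] u_def zn[symmetric] n
    by (simp only: power_mult_div_odd_power[OF z])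
  have "z ^ (m + 1) * (u / (2 * of_rat (d\<^sup>2 - R)) + A_poly n d R u * sR) = y'"
    "z ^ (m + 1) * (u / (2 * of_rat (d\<^sup>2 - R)) - A_poly n d R u * sR) = y"
    unfolding A half using z by (simp_all add: field_simps)
  then show ?thesis
    unfolding Let_def div z_def[symmetric] u_def[symmetric] by auto
qed

end
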